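(* Let $M\subseteq N$ be models of $\mathrm{AA}_0$ such that $N$ is a cofinal extension of $M$ and $M\preccurlyeq_{\Sigma_0}N$. If $M$ and $N$ satisfy the collection axioms, then $M\preccurlyeq N$.
   Context: Structures are complete metric spaces of diameter at most $1$ in $L=\{+,\cdot,\wedge,\vee,0,1\}$ (operations $1$-Lipschitz, $d$ the only relation symbol); affine formulas are built from $1$ and $d(t_1,t_2)$ using $+$, real scalar multiples, $\sup$, $\inf$. $|x|=d(x,0)$; $x\le y$ means $x\wedge y=x$; $nx$, $x^n$ iterated sum/product. $\mathrm{AA}_0$ consists of (universally quantified): (A1) the identities of the nonnegative part of a lattice-ordered commutative ring with identity (commutative semiring axioms, lattice axioms, distributivity of $+,\cdot$ over $\wedge,\vee$, $0\le x$); (A2) $\inf_y d(x,(x\wedge y)+1)=1-|x|$ and $x\le x^2$; (A3) $d(x+z,y+z)=d(x,y)$; (A4) $d(y,z)\le d(xy,xz)+1-|x|$; (A5) $d(xy,xz)=d(x^ny,x^nz)\le d(y,z)$; (A6) $d(nx,ny)=d(x^n,y^n)=d(x,y)$, $n\ge1$; (A7) $|x\wedge y|+|x\vee y|=|x|+|y|$; (A8) $|xy+z|=|(x\wedge y)+z|$; (A9) $|x+y+z|=|(x\vee y)+z|$; (A10) $\inf_t d((x\wedge y)+t,y)=0$. Bounded quantifiers: $\sup_{x\le t}\phi(x):=\sup_x\phi(x\wedge t)$, $\inf_{x\le t}\phi(x):=\inf_x\phi(x\wedge t)$ ($t$ a term without $x$); $\Sigma_0$ formulas are affine formulas with only bounded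 quantifiers. $M\preccurlyeq_{\Sigma_0}N$ means $\phi^M(\bar a)=\phi^N(\bar a)$ for all $\Sigma_0$ formulas $\phi$ and $\bar a\in M$; $M\preccurlyeq N$ means this for all affine formulas. $N$ is a cofinal extension of $M$ if $M\subseteq N$ is a substructure and every $x\in N$ satisfies $x\le y$ for some $y\in M$. The collection axioms are, for every affine formula $\phi(x,\bar y,\bar z)$, the universal closures of $\inf_{x\le t}\sup_{\bar y}\phi(x,\bar y,\bar z)=\sup_s\inf_{x\le t}\sup_{\bar y\le s}\phi(x,\bar y,\bar z)$. *)

theory Defs
  imports Main "HOL-Library.FuncSet" Complex_Main
begin

record 'a lstr =
  carrier :: "'a set"
  dst :: "'a \<Rightarrow> 'a \<Rightarrow> real"
  pl  :: "'a \<Rightarrow> 'a \<Rightarrow> 'a"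
  tms :: "'a \<Rightarrow> 'a \<Rightarrow> 'a"
  mt  :: "'a \<Rightarrow> 'a \<Rightarrow> 'a"
  jn  :: "'a \<Rightarrow> 'a \<Rightarrow> 'a"
  zr  :: 'a
  on  :: 'a

definition metric_lstr :: "'a lstr \<Rightarrow> bool" where
  "metric_lstr S \<longleftrightarrow>
     zr S \<in> carrier S \<and> on S \<in> carrier S \<and>
     (\<forall>x\<in>carrier S. \<forall>y\<in>carrier S.
        pl S x y \<in> carrier S \<and> tms S x y \<in> carrier S \<and>
        mt S x y \<in> carrier S \<and> jn S x y \<in> carrier S) \<and>
     (\<forall>x\<in>carrier S. \<forall>y\<in>carrier S.
        0 \<le> dst S x y \<and> dst S x y \<le> 1 \<and> (dst S x y = 0 \<longleftrightarrow> x = y) \<and>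
        dst S x y = dst S y x) \<and>
     (\<forall>x\<in>carrier S. \<forall>y\<in>carrier S. \<forall>z\<in>carrier S. dst S x z \<le> dst S x y + dst S y z) \<and>
     (\<forall>f. range f \<subseteq> carrier S \<longrightarrow>
          (\<forall>e::real>0. \<exists>K::nat. \<forall>m\<ge>K. \<forall>n\<ge>K. dst S (f m) (f n) < e) \<longrightarrow>
          (\<exists>l\<in>carrier S. \<forall>e::real>0. \<exists>K::nat. \<forall>n\<ge>K. dst S (f n) l < e)) \<and>
     (\<forall>op\<in>{pl S, tms S, mt S, jn S}. \<forall>x\<in>carrier S. \<forall>x'\<in>carrier S. \<forall>y\<in>carrier S.
        dst S (op x y) (op x' y) \<le> dst S x x' \<and> dst S (op y x) (op y x') \<le> dst S x x')"

definition leq :: "'a lstr \<Rightarrow> 'a \<Rightarrow> 'a \<Rightarrow> bool" where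
  "leq S x y \<longleftrightarrow> mt S x y = x"

definition nrm :: "'a lstr \<Rightarrow> 'a \<Rightarrow> real" where
  "nrm S x = dst S x (zr S)"

fun nsum :: "'a lstr \<Rightarrow> nat \<Rightarrow> 'a \<Rightarrow> 'a" where
  "nsum S 0 x = zr S"
| "nsum S (Suc n) x = pl S x (nsum S n x)"

fun npow :: "'a lstr \<Rightarrow> 'a \<Rightarrow> nat \<Rightarrow> 'a" where
  "npow S x 0 = on S"
| "npow S x (Suc n) = tms S x (npow S x n)"

definition AA0 :: "'a lstr \<Rightarrow> bool" where
  "AA0 S \<longleftrightarrow> (let C = carrier S; d = dst S; p = pl S; m = tms S; a = mt S; j = jn S;
                   z = zr S; u = on S in
    \<comment> \<open>(A1) commutative semiring\<close>
    (\<forall>x\<in>C. \<forall>y\<in>C. \<forall>w\<in>C.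
       p (p x y) w = p x (p y w) \<and> p x y = p y x \<and> p x z = x \<and>
       m (m x y) w = m x (m y w) \<and> m x y = m y x \<and> m x u = x \<and>
       m x (p y w) = p (m x y) (m x w) \<and> m z x = z) \<and>
    \<comment> \<open>(A1) lattice\<close>
    (\<forall>x\<in>C. \<forall>y\<in>C. \<forall>w\<in>C.
       a (a x y) w = a x (a y w) \<and> a x y = a y x \<and> a x x = x \<and>
       j (j x y) w = j x (j y w) \<and> j x y = j y x \<and> j x x = x \<and>
       a x (j x y) = x \<and> j x (a x y) = x) \<and>
    \<comment> \<open>(A1) distributivity of + and * over meet and join, and 0 \<le> x\<close>
    (\<forall>x\<in>C. \<forall>y\<in>C. \<forall>w\<in>C.
       p x (a y w) = a (p x y) (p x w) \<and> p x (j y w) = j (p x y) (p x w) \<and>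
       m x (a y w) = a (m x y) (m x w) \<and> m x (j y w) = j (m x y) (m x w)) \<and>
    (\<forall>x\<in>C. leq S z x) \<and>
    \<comment> \<open>(A2)\<close>
    (\<forall>x\<in>C. (INF y\<in>C. d x (p (a x y) u)) = 1 - nrm S x \<and> leq S x (m x x)) \<and>
    \<comment> \<open>(A3)\<close>
    (\<forall>x\<in>C. \<forall>y\<in>C. \<forall>w\<in>C. d (p x w) (p y w) = d x y) \<and>
    \<comment> \<open>(A4)\<close>
    (\<forall>x\<in>C. \<forall>y\<in>C. \<forall>w\<in>C. d y w \<le> d (m x y) (m x w) + 1 - nrm S x) \<and>
    \<comment> \<open>(A5)\<close>
    (\<forall>n\<ge>1. \<forall>x\<in>C. \<forall>y\<in>C. \<forall>w\<in>C.
       d (m x y) (m x w) = d (m (npow S x n) y) (m (npow S x n) w) \<and> d (m x y) (m x w) \<le> d y w) \<and>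
    \<comment> \<open>(A6)\<close>
    (\<forall>n\<ge>1. \<forall>x\<in>C. \<forall>y\<in>C.
       d (nsum S n x) (nsum S n y) = d x y \<and> d (npow S x n) (npow S y n) = d x y) \<and>
    \<comment> \<open>(A7)\<close>
    (\<forall>x\<in>C. \<forall>y\<in>C. nrm S (a x y) + nrm S (j x y) = nrm S x + nrm S y) \<and>
    \<comment> \<open>(A8)\<close>
    (\<forall>x\<in>C. \<forall>y\<in>C. \<forall>w\<in>C. nrm S (p (m x y) w) = nrm S (p (a x y) w)) \<and>
    \<comment> \<open>(A9)\<close>
    (\<forall>x\<in>C. \<forall>y\<in>C. \<forall>w\<in>C. nrm S (p (p x y) w) = nrm S (p (j x y) w)) \<and>
    \<comment> \<open>(A10)\<close>
    (\<forall>x\<in>C. \<forall>y\<in>C. (INF t\<in>C. d (p (a x y) t) y) = 0))"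

definition model_AA0 :: "'a lstr \<Rightarrow> bool" where
  "model_AA0 S \<longleftrightarrow> metric_lstr S \<and> AA0 S"

datatype trm = Var nat | TZero | TOne | TPlus trm trm | TTimes trm trm
  | TMeet trm trm | TJoin trm trm

fun tvars :: "trm \<Rightarrow> nat set" where
  "tvars (Var n) = {n}"
| "tvars TZero = {}"
| "tvars TOne = {}"
| "tvars (TPlus s t) = tvars s \<union> tvars t"
| "tvars (TTimes s t) = tvars s \<union> tvars t"
| "tvars (TMeet s t) = tvars s \<union> tvars t"
| "tvars (TJoin s t) = tvars s \<union> tvars t"

fun teval :: "'a lstr \<Rightarrow> (nat \<Rightarrow> 'a) \<Rightarrow> trm \<Rightarrow> 'a" where
  "teval S \<sigma> (Var n) = \<sigma> n"
| "teval S \<sigma> TZero = zr S"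
| "teval S \<sigma> TOne = on S"
| "teval S \<sigma> (TPlus s t) = pl S (teval S \<sigma> s) (teval S \<sigma> t)"
| "teval S \<sigma> (TTimes s t) = tms S (teval S \<sigma> s) (teval S \<sigma> t)"
| "teval S \<sigma> (TMeet s t) = mt S (teval S \<sigma> s) (teval S \<sigma> t)"
| "teval S \<sigma> (TJoin s t) = jn S (teval S \<sigma> s) (teval S \<sigma> t)"

text \<open>The bounded quantifiers sup_{x \<le> t} phi := sup_x phi(x meet t) (and inf) are included as
  constructors FBSup/FBInf with exactly this semantics (they are abbreviations).\<close>

datatype fm = FOne | FDist trm trm | FAdd fm fm | FScal real fm
  | FSup nat fm | FInf nat fm | FBSup nat trm fm | FBInf nat trm fm

fun fv :: "fm \<Rightarrow> nat set" where
  "fv FOne = {}"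
| "fv (FDist s t) = tvars s \<union> tvars t"
| "fv (FAdd f g) = fv f \<union> fv g"
| "fv (FScal r f) = fv f"
| "fv (FSup x f) = fv f - {x}"
| "fv (FInf x f) = fv f - {x}"
| "fv (FBSup x t f) = tvars t \<union> (fv f - {x})"
| "fv (FBInf x t f) = tvars t \<union> (fv f - {x})"

fun feval :: "'a lstr \<Rightarrow> (nat \<Rightarrow> 'a) \<Rightarrow> fm \<Rightarrow> real" where
  "feval S \<sigma> FOne = 1"
| "feval S \<sigma> (FDist s t) = dst S (teval S \<sigma> s) (teval S \<sigma> t)"
| "feval S \<sigma> (FAdd f g) = feval S \<sigma> f + feval S \<sigma> g"
| "feval S \<sigma> (FScal r f) = r * feval S \<sigma> f"
| "feval S \<sigma> (FSup x f) = (SUP a\<in>carrier S. feval S (\<sigma>(x := a)) f)"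
| "feval S \<sigma> (FInf x f) = (INF a\<in>carrier S. feval S (\<sigma>(x := a)) f)"
| "feval S \<sigma> (FBSup x t f) =
     (SUP a\<in>carrier S. feval S (\<sigma>(x := mt S a (teval S \<sigma> t))) f)"
| "feval S \<sigma> (FBInf x t f) =
     (INF a\<in>carrier S. feval S (\<sigma>(x := mt S a (teval S \<sigma> t))) f)"

fun sigma0 :: "fm \<Rightarrow> bool" where
  "sigma0 FOne = True"
| "sigma0 (FDist s t) = True"
| "sigma0 (FAdd f g) = (sigma0 f \<and> sigma0 g)"
| "sigma0 (FScal r f) = sigma0 f"
| "sigma0 (FSup x f) = False"
| "sigma0 (FInf x f) = False"
| "sigma0 (FBSup x t f) = (x \<notin> tvars t \<and> sigma0 f)"
| "sigma0 (FBInf x t f) = (x \<notin> tvars t \<and> sigma0 f)"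

definition substructure :: "'a lstr \<Rightarrow> 'a lstr \<Rightarrow> bool" where
  "substructure M N \<longleftrightarrow> carrier M \<subseteq> carrier N \<and> zr M = zr N \<and> on M = on N \<and>
     (\<forall>x\<in>carrier M. \<forall>y\<in>carrier M.
        dst M x y = dst N x y \<and> pl M x y = pl N x y \<and> tms M x y = tms N x y \<and>
        mt M x y = mt N x y \<and> jn M x y = jn N x y)"

definition cofinal_ext :: "'a lstr \<Rightarrow> 'a lstr \<Rightarrow> bool" where
  "cofinal_ext M N \<longleftrightarrow> substructure M N \<and> (\<forall>x\<in>carrier N. \<exists>y\<in>carrier M. leq N x y)"

definition sigma0_elem :: "'a lstr \<Rightarrow> 'a lstr \<Rightarrow> bool" where
  "sigma0_elem M N \<longleftrightarrow>
     (\<forall>\<phi> \<sigma>. sigma0 \<phi> \<longrightarrow> range \<sigma> \<subseteq> carrier M \<longrightarrow> feval M \<sigma> \<phi> = feval N \<sigma> \<phi>)"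

definition elem :: "'a lstr \<Rightarrow> 'a lstr \<Rightarrow> bool" where
  "elem M N \<longleftrightarrow> (\<forall>\<phi> \<sigma>. range \<sigma> \<subseteq> carrier M \<longrightarrow> feval M \<sigma> \<phi> = feval N \<sigma> \<phi>)"

definition sups :: "nat list \<Rightarrow> fm \<Rightarrow> fm" where
  "sups ys \<phi> = foldr FSup ys \<phi>"

definition bsups :: "nat list \<Rightarrow> nat \<Rightarrow> fm \<Rightarrow> fm" where
  "bsups ys s \<phi> = foldr (\<lambda>y. FBSup y (Var s)) ys \<phi>"

text \<open>inf_{x \<le> t} sup_ys phi = sup_s inf_{x \<le> t} sup_{ys \<le> s} phi, universally closed
  (t, s fresh variables).\<close>
definition collection :: "'a lstr \<Rightarrow> bool" where
  "collection S \<longleftrightarrow>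
     (\<forall>\<phi> x ys t s \<sigma>.
        x \<notin> set ys \<and> t \<noteq> x \<and> t \<notin> set ys \<and> t \<notin> fv \<phi> \<and>
        s \<noteq> x \<and> s \<noteq> t \<and> s \<notin> set ys \<and> s \<notin> fv \<phi> \<and>
        range \<sigma> \<subseteq> carrier S \<longrightarrow>
        feval S \<sigma> (FBInf x (Var t) (sups ys \<phi>)) =
        feval S \<sigma> (FSup s (FBInf x (Var t) (bsups ys s \<phi>))))"

end

(* Every affine formula is equivalent, uniformly over all models of AA_0 with collection, to a
   prenex formula Q_1 s_1 ... Q_n s_n. theta with theta Sigma_0, in which each s_i occurs only as
   the bound of bounded quantifiers and in such a way that theta is nondecreasing in s_i if Q_i
   is a sup and nonincreasing if it is an inf.  An unbounded sup_x phi becomes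
   sup_s sup_{x <= s} phi, and a bounded quantifier is pushed through the prefix: past quantifiers
   of its own kind by commuting, past quantifiers of the other kind by collection.
   For such a prenex formula the values in M and N agree, by induction on the prefix: the matrix
   by Sigma_0-elementarity, and each quantifier because every element of N lies below one of M,
   so that by monotonicity the sup or inf over N is already reached over M. *)

theory Submission
  imports Defs
begin

section \<open>Suprema and infima of bounded real families\<close>

definition quant :: "bool \<Rightarrow> 'b set \<Rightarrow> ('b \<Rightarrow> real) \<Rightarrow> real" where
  "quant b A g = (if b then (SUP a\<in>A. g a) else (INF a\<in>A. g a))"

definition le_pol :: "bool \<Rightarrow> real \<Rightarrow> real \<Rightarrow> bool" where
  "le_pol p x y \<longleftrightarrow> (if p then x \<le> y else y \<le> x)"

lemma le_pol_refl [simp]: "le_pol p x x"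
  by (simp add: le_pol_def)

lemma le_pol_trans [trans]: "le_pol p x y \<Longrightarrow> le_pol p y z \<Longrightarrow> le_pol p x z"
  by (auto simp: le_pol_def split: if_splits)

lemma le_pol_antisym: "le_pol p x y \<Longrightarrow> le_pol p y x \<Longrightarrow> x = y"
  by (auto simp: le_pol_def split: if_splits)

lemma le_pol_Not: "le_pol (\<not> p) x y \<longleftrightarrow> le_pol p y x"
  by (simp add: le_pol_def)

lemma le_pol_add: "le_pol p x y \<Longrightarrow> le_pol p x' y' \<Longrightarrow> le_pol p (x + x') (y + y')"
  by (auto simp: le_pol_def split: if_splits)

lemma le_pol_scale:
  "le_pol (if 0 \<le> r then p else \<not> p) x y \<Longrightarrow> le_pol p (r * x) (r * y)"
  by (auto simp: le_pol_def split: if_splits intro: mult_left_mono mult_left_mono_neg)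

lemma bdd_above_if_abs_le: "(\<And>a. a \<in> A \<Longrightarrow> \<bar>g a\<bar> \<le> (B::real)) \<Longrightarrow> bdd_above (g ` A)"
  by (rule bdd_aboveI[of _ B]) (force simp: abs_le_iff)

lemma bdd_below_if_abs_le: "(\<And>a. a \<in> A \<Longrightarrow> \<bar>g a\<bar> \<le> (B::real)) \<Longrightarrow> bdd_below (g ` A)"
  by (rule bdd_belowI[of _ "-B"]) (force simp: abs_le_iff)

lemma le_pol_quant_member:
  assumes "a \<in> A" and "\<And>a. a \<in> A \<Longrightarrow> \<bar>g a\<bar> \<le> B"
  shows "le_pol b (g a) (quant b A g)"
proof -
  have "bdd_above (g ` A)" "bdd_below (g ` A)"
    by (rule bdd_above_if_abs_le bdd_below_if_abs_le, rule assms(2), assumption)+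
  then show ?thesis using assms(1) by (simp add: le_pol_def quant_def cSUP_upper cINF_lower)
qed

lemma le_pol_quant_bound:
  assumes "A \<noteq> {}" and "\<And>a. a \<in> A \<Longrightarrow> le_pol b (g a) y"
  shows "le_pol b (quant b A g) y"
  using assms by (simp add: le_pol_def quant_def cSUP_least cINF_greatest)

lemma quant_abs_le:
  assumes "A \<noteq> {}" and "\<And>a. a \<in> A \<Longrightarrow> \<bar>g a\<bar> \<le> B"
  shows "\<bar>quant b A g\<bar> \<le> B"
proof -
  obtain a where a: "a \<in> A" using assms(1) by blast
  have "le_pol b (quant b A g) (if b then B else -B)"
    using assms(2)
    by (intro le_pol_quant_bound[OF assms(1)]) (fastforce simp: le_pol_def abs_le_iff)
  moreover have "le_pol b (if b then -B else B) (quant b A g)"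
    using le_pol_trans[OF _ le_pol_quant_member[OF a assms(2)]] assms(2)[OF a]
    by (auto simp: le_pol_def abs_le_iff)
  ultimately show ?thesis by (auto simp: le_pol_def split: if_splits)
qed

lemma le_pol_quant:
  assumes "A \<noteq> {}" and "\<And>c. c \<in> C \<Longrightarrow> \<bar>h c\<bar> \<le> B"
    and "\<And>a. a \<in> A \<Longrightarrow> \<exists>c\<in>C. le_pol b (g a) (h c)"
  shows "le_pol b (quant b A g) (quant b C h)"
proof (rule le_pol_quant_bound[OF assms(1)])
  fix a assume "a \<in> A"
  then obtain c where "c \<in> C" "le_pol b (g a) (h c)" using assms(3) by blast
  then show "le_pol b (g a) (quant b C h)"
    using le_pol_trans le_pol_quant_member[of c C h B b] assms(2) by blast
qed

lemma quant_mono: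
  assumes "A \<noteq> {}" and "\<And>a. a \<in> A \<Longrightarrow> \<bar>g a\<bar> \<le> B" and "\<And>a. a \<in> A \<Longrightarrow> \<bar>h a\<bar> \<le> B"
    and "\<And>a. a \<in> A \<Longrightarrow> le_pol p (g a) (h a)"
  shows "le_pol p (quant b A g) (quant b A h)"
proof (cases "p = b")
  case True
  show ?thesis
    unfolding True
  proof (rule le_pol_quant[OF assms(1,3)])
    fix a assume "a \<in> A"
    then show "\<exists>c\<in>A. le_pol b (g a) (h c)" using assms(4) True by blast
  qed
next
  case False
  then have p: "p = (\<not> b)" by blast
  have "le_pol b (quant b A h) (quant b A g)"
  proof (rule le_pol_quant[OF assms(1,2)])
    fix a assume "a \<in> A"
    then show "\<exists>c\<in>A. le_pol b (h a) (g c)" using assms(4) p by (auto simp: le_pol_Not)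
  qed
  then show ?thesis using p by (simp add: le_pol_Not)
qed

lemma quant_cong: "(\<And>a. a \<in> A \<Longrightarrow> g a = h a) \<Longrightarrow> quant b A g = quant b A h"
  by (simp add: quant_def cong: SUP_cong INF_cong)

lemma quant_False: "quant False A g = - quant True A (\<lambda>a. - g a)"
  by (simp add: quant_def Inf_real_def image_image)

lemma quant_swap:
  assumes "A \<noteq> {}" "C \<noteq> {}" and "\<And>a c. a \<in> A \<Longrightarrow> c \<in> C \<Longrightarrow> \<bar>g a c\<bar> \<le> B"
  shows "quant b A (\<lambda>a. quant b C (g a)) = quant b C (\<lambda>c. quant b A (\<lambda>a. g a c))"
proof -
  have le: "le_pol b (quant b A (\<lambda>a. quant b C (g a))) (quant b C (\<lambda>c. quant b A (\<lambda>a. g a c)))"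
    if "A \<noteq> {}" "C \<noteq> {}" "\<And>a c. a \<in> A \<Longrightarrow> c \<in> C \<Longrightarrow> \<bar>g a c\<bar> \<le> B"
    for A C g
  proof (intro le_pol_quant_bound that(1,2))
    fix a c assume "a \<in> A" "c \<in> C"
    have "le_pol b (g a c) (quant b A (\<lambda>a. g a c))"
      using \<open>a \<in> A\<close> \<open>c \<in> C\<close> that(3) by (intro le_pol_quant_member) auto
    also have "le_pol b \<dots> (quant b C (\<lambda>c. quant b A (\<lambda>a. g a c)))"
      using \<open>c \<in> C\<close> that by (intro le_pol_quant_member quant_abs_le) auto
    finally show "le_pol b (g a c) (quant b C (\<lambda>c. quant b A (\<lambda>a. g a c)))" .
  qed
  show ?thesis
    by (rule le_pol_antisym[OF le[OF assms] le]) (use assms in auto)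
qed

lemma quant_add_const:
  assumes "A \<noteq> {}" and "\<And>a. a \<in> A \<Longrightarrow> \<bar>g a\<bar> \<le> B"
  shows "quant b A (\<lambda>a. g a + c) = quant b A g + c"
proof -
  have "bdd_above (g ` A)" "bdd_below (g ` A)"
    by (rule bdd_above_if_abs_le bdd_below_if_abs_le, rule assms(2), assumption)+
  then show ?thesis
    using Sup_add_eq[of g A c] Inf_add_eq[of g A c] assms(1) by (simp add: quant_def add.commute)
qed

lemma quant_scale:
  assumes "A \<noteq> {}" and "\<And>a. a \<in> A \<Longrightarrow> \<bar>g a\<bar> \<le> B"
  shows "r * quant b A g = quant (if 0 \<le> r then b else \<not> b) A (\<lambda>a. r * g a)"
proof -
  have ne: "g ` A \<noteq> {}" using assms(1) by blast
  have bdd: "bdd_above (g ` A)" "bdd_below (g ` A)"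
    by (rule bdd_above_if_abs_le bdd_below_if_abs_le, rule assms(2), assumption)+
  have cont: "continuous (at_left x) ((*) r)" "continuous (at_right x) ((*) r)" for x :: real
    by (intro continuous_intros)+
  show ?thesis
  proof (cases "0 \<le> r")
    case True
    then have "mono ((*) r)" by (auto intro: monoI mult_left_mono)
    then show ?thesis
      using True continuous_at_Sup_mono[OF _ cont(1) ne bdd(1)]
        continuous_at_Inf_mono[OF _ cont(2) ne bdd(2)]
      by (simp add: quant_def image_image)
  next
    case False
    then have "antimono ((*) r)" by (auto intro: antimonoI mult_left_mono_neg)
    then show ?thesis
      using False continuous_at_Sup_antimono[OF _ cont(1) ne bdd(1)]
        continuous_at_Inf_antimono[OF _ cont(2) ne bdd(2)]
      by (simp add: quant_def image_image)
  qed
qed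

lemma quant_reindex:
  assumes "A \<noteq> {}" and "\<And>a. a \<in> A \<Longrightarrow> \<bar>g a\<bar> \<le> B"
    and "\<And>a c. a \<in> A \<Longrightarrow> c \<in> A \<Longrightarrow> m c a \<in> A" and "\<And>a. a \<in> A \<Longrightarrow> m a a = a"
  shows "quant b A (\<lambda>a. quant b A (\<lambda>c. g (m c a))) = quant b A g"
proof (rule le_pol_antisym)
  show "le_pol b (quant b A (\<lambda>a. quant b A (\<lambda>c. g (m c a)))) (quant b A g)"
    using assms by (intro le_pol_quant_bound le_pol_quant_member) auto
  show "le_pol b (quant b A g) (quant b A (\<lambda>a. quant b A (\<lambda>c. g (m c a))))"
  proof (rule le_pol_quant[OF assms(1)])
    show "\<bar>quant b A (\<lambda>c. g (m c a))\<bar> \<le> B" if "a \<in> A" for a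
      using assms that by (intro quant_abs_le) auto
    fix a assume a: "a \<in> A"
    have "le_pol b (g (m a a)) (quant b A (\<lambda>c. g (m c a)))"
      using assms a by (intro le_pol_quant_member) auto
    then show "\<exists>c\<in>A. le_pol b (g a) (quant b A (\<lambda>d. g (m d c)))"
      using a assms(4) by auto
  qed
qed

lemma quant_cofinal:
  assumes "A' \<subseteq> A" "A' \<noteq> {}" and "\<And>a. a \<in> A \<Longrightarrow> \<bar>g a\<bar> \<le> B"
    and "\<And>a. a \<in> A \<Longrightarrow> \<exists>a'\<in>A'. le_pol b (g a) (g a')"
  shows "quant b A' g = quant b A g"
proof (rule le_pol_antisym)
  show "le_pol b (quant b A' g) (quant b A g)"
  proof (rule le_pol_quant[OF assms(2)])
    show "\<bar>g a\<bar> \<le> B" if "a \<in> A" for a using assms(3) that .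
    show "\<exists>c\<in>A. le_pol b (g a) (g c)" if "a \<in> A'" for a using assms(1) that le_pol_refl by blast
  qed
  show "le_pol b (quant b A g) (quant b A' g)"
    using assms by (intro le_pol_quant) auto
qed

definition fquant :: "bool \<Rightarrow> nat \<Rightarrow> fm \<Rightarrow> fm" where
  "fquant b x f = (if b then FSup x f else FInf x f)"

definition fbquant :: "bool \<Rightarrow> nat \<Rightarrow> trm \<Rightarrow> fm \<Rightarrow> fm" where
  "fbquant b x t f = (if b then FBSup x t f else FBInf x t f)"

fun prenex :: "(bool \<times> nat) list \<Rightarrow> fm \<Rightarrow> fm" where
  "prenex [] \<theta> = \<theta>"
| "prenex ((b, x) # q) \<theta> = fquant b x (prenex q \<theta>)"

(* v occurs only as the bound of bounded quantifiers, of the kind that makes f nondecreasing (p)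
   or nonincreasing (\<not> p) in v for the lattice order *)
fun monotone_in :: "bool \<Rightarrow> nat \<Rightarrow> fm \<Rightarrow> bool" where
  "monotone_in p v FOne = True"
| "monotone_in p v (FDist s t) = (v \<notin> tvars s \<and> v \<notin> tvars t)"
| "monotone_in p v (FAdd f g) = (monotone_in p v f \<and> monotone_in p v g)"
| "monotone_in p v (FScal r f) = monotone_in (if 0 \<le> r then p else \<not> p) v f"
| "monotone_in p v (FSup x f) = (x = v \<or> monotone_in p v f)"
| "monotone_in p v (FInf x f) = (x = v \<or> monotone_in p v f)"
| "monotone_in p v (FBSup x t f) =
     ((if t = Var v then p else v \<notin> tvars t) \<and> (x = v \<or> monotone_in p v f))"
| "monotone_in p v (FBInf x t f) =
     ((if t = Var v then \<not> p else v \<notin> tvars t) \<and> (x = v \<or> monotone_in p v f))"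

definition monotone_prenex :: "(bool \<times> nat) list \<Rightarrow> fm \<Rightarrow> bool" where
  "monotone_prenex q \<theta> \<longleftrightarrow>
     sigma0 \<theta> \<and> distinct (map snd q) \<and> (\<forall>(b, s)\<in>set q. monotone_in b s \<theta>)"

definition keeps_monotone :: "nat set \<Rightarrow> fm \<Rightarrow> fm \<Rightarrow> bool" where
  "keeps_monotone A f g \<longleftrightarrow> (\<forall>v\<in>A. \<forall>p. monotone_in p v f \<longrightarrow> monotone_in p v g)"

lemma fv_fquant [simp]: "fv (fquant b x f) = fv f - {x}"
  by (simp add: fquant_def)

lemma fv_fbquant [simp]: "fv (fbquant b x t f) = tvars t \<union> (fv f - {x})"
  by (simp add: fbquant_def)

lemma sigma0_fbquant [simp]: "sigma0 (fbquant b x t f) \<longleftrightarrow> x \<notin> tvars t \<and> sigma0 f"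
  by (simp add: fbquant_def)

lemma monotone_in_fquant [simp]: "monotone_in p v (fquant b x f) \<longleftrightarrow> x = v \<or> monotone_in p v f"
  by (simp add: fquant_def)

lemma monotone_in_fbquant [simp]:
  "monotone_in p v (fbquant b x t f) \<longleftrightarrow>
     (if t = Var v then p = b else v \<notin> tvars t) \<and> (x = v \<or> monotone_in p v f)"
  by (cases b) (auto simp: fbquant_def)

lemma monotone_in_fresh: "v \<notin> fv f \<Longrightarrow> monotone_in p v f"
  by (induction f arbitrary: p) auto

lemma monotone_in_prenex: "monotone_in p v \<theta> \<Longrightarrow> monotone_in p v (prenex q \<theta>)"
  by (induction q) auto

lemma keeps_monotone_trans:
  "keeps_monotone A f g \<Longrightarrow> keeps_monotone B g h \<Longrightarrow> A \<subseteq> B \<Longrightarrow> keeps_monotone A f h"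
  unfolding keeps_monotone_def by blast

lemma fv_prenex: "fv (prenex q \<theta>) = fv \<theta> - set (map snd q)"
  by (induction q) auto

lemma prenex_append: "prenex (q @ q') \<theta> = prenex q (prenex q' \<theta>)"
  by (induction q) auto

lemma finite_tvars: "finite (tvars t)"
  by (induction t) auto

lemma finite_fv: "finite (fv f)"
  by (induction f) (auto simp: finite_tvars)

lemma fresh_var:
  assumes "finite (A :: nat set)"
  obtains y where "y \<notin> A"
  using ex_new_if_finite[OF infinite_UNIV_nat assms] by blast

lemma range_upd_subset: "range \<sigma> \<subseteq> A \<Longrightarrow> a \<in> A \<Longrightarrow> range (\<sigma>(x := a)) \<subseteq> A"
  by auto

lemma teval_cong: "(\<And>v. v \<in> tvars t \<Longrightarrow> \<sigma> v = \<tau> v) \<Longrightarrow> teval K \<sigma> t = teval K \<tau> t"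
  by (induction t) auto

lemma feval_cong: "\<forall>v\<in>fv f. \<sigma> v = \<tau> v \<Longrightarrow> feval K \<sigma> f = feval K \<tau> f"
proof (induction f arbitrary: \<sigma> \<tau>)
  case (FDist s t)
  then show ?case using teval_cong[of s \<sigma> \<tau>] teval_cong[of t \<sigma> \<tau>] by simp
next
  case (FAdd f g)
  have "feval K \<sigma> f = feval K \<tau> f" "feval K \<sigma> g = feval K \<tau> g"
    using FAdd.prems by (intro FAdd.IH; auto)+
  then show ?case by simp
next
  case (FSup x f)
  then show ?case by (auto intro!: SUP_cong)
next
  case (FInf x f)
  then show ?case by (auto intro!: INF_cong)
next
  case (FBSup x t f)
  then have "teval K \<sigma> t = teval K \<tau> t" by (intro teval_cong) auto
  with FBSup show ?case by (auto intro!: SUP_cong)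
next
  case (FBInf x t f)
  then have "teval K \<sigma> t = teval K \<tau> t" by (intro teval_cong) auto
  with FBInf show ?case by (auto intro!: INF_cong)
qed auto

lemma teval_upd_fresh: "v \<notin> tvars t \<Longrightarrow> teval K (\<sigma>(v := a)) t = teval K \<sigma> t"
  by (rule teval_cong) auto

lemma feval_upd_fresh: "v \<notin> fv f \<Longrightarrow> feval K (\<sigma>(v := a)) f = feval K \<sigma> f"
  by (rule feval_cong) auto

lemma feval_quant:
  "feval K \<sigma> (FSup x f) = quant True (carrier K) (\<lambda>a. feval K (\<sigma>(x := a)) f)"
  "feval K \<sigma> (FInf x f) = quant False (carrier K) (\<lambda>a. feval K (\<sigma>(x := a)) f)"
  "feval K \<sigma> (FBSup x t f) =
     quant True (carrier K) (\<lambda>a. feval K (\<sigma>(x := mt K a (teval K \<sigma> t))) f)"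
  "feval K \<sigma> (FBInf x t f) =
     quant False (carrier K) (\<lambda>a. feval K (\<sigma>(x := mt K a (teval K \<sigma> t))) f)"
  by (simp_all add: quant_def)

lemma feval_fquant:
  "feval K \<sigma> (fquant b x f) = quant b (carrier K) (\<lambda>a. feval K (\<sigma>(x := a)) f)"
  by (cases b) (simp_all add: fquant_def quant_def)

lemma feval_fbquant:
  "feval K \<sigma> (fbquant b x t f) =
     quant b (carrier K) (\<lambda>a. feval K (\<sigma>(x := mt K a (teval K \<sigma> t))) f)"
  by (cases b) (simp_all add: fbquant_def quant_def)

lemma feval_fbquant_Var:
  assumes "y \<notin> fv f" "y \<noteq> x"
  shows "feval K (\<sigma>(y := teval K \<sigma> t)) (fbquant b x (Var y) f) = feval K \<sigma> (fbquant b x t f)"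
proof -
  have "feval K (\<sigma>(y := T, x := u)) f = feval K (\<sigma>(x := u)) f" for T u
    by (rule feval_cong) (use assms in auto)
  then show ?thesis by (simp add: feval_fbquant)
qed

fun fm_bound :: "fm \<Rightarrow> real" where
  "fm_bound FOne = 1"
| "fm_bound (FDist s t) = 1"
| "fm_bound (FAdd f g) = fm_bound f + fm_bound g"
| "fm_bound (FScal r f) = \<bar>r\<bar> * fm_bound f"
| "fm_bound (FSup x f) = fm_bound f"
| "fm_bound (FInf x f) = fm_bound f"
| "fm_bound (FBSup x t f) = fm_bound f"
| "fm_bound (FBInf x t f) = fm_bound f"

lemma metric_lstr_closed:
  assumes "metric_lstr K" and "x \<in> carrier K" "y \<in> carrier K"
  shows "pl K x y \<in> carrier K" "tms K x y \<in> carrier K" "mt K x y \<in> carrier K"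
    "jn K x y \<in> carrier K"
  using assms unfolding metric_lstr_def by blast+

lemma metric_lstr_dst_bounds:
  assumes "metric_lstr K" and "x \<in> carrier K" "y \<in> carrier K"
  shows "0 \<le> dst K x y" "dst K x y \<le> 1"
  using assms unfolding metric_lstr_def by blast+

lemma carrier_nonempty: "metric_lstr K \<Longrightarrow> carrier K \<noteq> {}"
  unfolding metric_lstr_def by (elim conjE) blast

lemma teval_in_carrier:
  assumes "metric_lstr K" "range \<sigma> \<subseteq> carrier K"
  shows "teval K \<sigma> t \<in> carrier K"
proof (induction t)
  case TZero then show ?case using assms(1) by (simp add: metric_lstr_def)
next
  case TOne then show ?case using assms(1) by (simp add: metric_lstr_def)
qed (use assms metric_lstr_closed in auto)

lemma feval_abs_le:
  assumes K: "metric_lstr K"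
  shows "range \<sigma> \<subseteq> carrier K \<Longrightarrow> \<bar>feval K \<sigma> f\<bar> \<le> fm_bound f"
proof (induction f arbitrary: \<sigma>)
  case (FDist s t)
  have "teval K \<sigma> s \<in> carrier K" "teval K \<sigma> t \<in> carrier K"
    by (rule teval_in_carrier[OF K FDist.prems])+
  then show ?case using metric_lstr_dst_bounds[OF K] by simp
next
  case (FAdd f g)
  have "\<bar>feval K \<sigma> f\<bar> \<le> fm_bound f" "\<bar>feval K \<sigma> g\<bar> \<le> fm_bound g"
    by (rule FAdd.IH(1)[OF FAdd.prems], rule FAdd.IH(2)[OF FAdd.prems])
  then show ?case using abs_triangle_ineq[of "feval K \<sigma> f" "feval K \<sigma> g"] by simp
next
  case (FScal r f)
  have "\<bar>feval K \<sigma> f\<bar> \<le> fm_bound f" by (rule FScal.IH[OF FScal.prems])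
  then show ?case by (simp add: abs_mult mult_left_mono)
next
  case (FSup x f)
  then have "\<bar>feval K (\<sigma>(x := a)) f\<bar> \<le> fm_bound f" if "a \<in> carrier K" for a
    using that by (intro FSup.IH) auto
  then show ?case
    by (simp only: feval_quant fm_bound.simps) (rule quant_abs_le[OF carrier_nonempty[OF K]])
next
  case (FInf x f)
  then have "\<bar>feval K (\<sigma>(x := a)) f\<bar> \<le> fm_bound f" if "a \<in> carrier K" for a
    using that by (intro FInf.IH) auto
  then show ?case
    by (simp only: feval_quant fm_bound.simps) (rule quant_abs_le[OF carrier_nonempty[OF K]])
next
  case (FBSup x t f)
  have "mt K a (teval K \<sigma> t) \<in> carrier K" if "a \<in> carrier K" for a
    using metric_lstr_closed(3)[OF K that teval_in_carrier[OF K FBSup.prems]] .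
  then have "\<bar>feval K (\<sigma>(x := mt K a (teval K \<sigma> t))) f\<bar> \<le> fm_bound f" if "a \<in> carrier K" for a
    using that FBSup.prems by (intro FBSup.IH) auto
  then show ?case
    by (simp only: feval_quant fm_bound.simps) (rule quant_abs_le[OF carrier_nonempty[OF K]])
next
  case (FBInf x t f)
  have "mt K a (teval K \<sigma> t) \<in> carrier K" if "a \<in> carrier K" for a
    using metric_lstr_closed(3)[OF K that teval_in_carrier[OF K FBInf.prems]] .
  then have "\<bar>feval K (\<sigma>(x := mt K a (teval K \<sigma> t))) f\<bar> \<le> fm_bound f" if "a \<in> carrier K" for a
    using that FBInf.prems by (intro FBInf.IH) auto
  then show ?case
    by (simp only: feval_quant fm_bound.simps) (rule quant_abs_le[OF carrier_nonempty[OF K]])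
qed simp

section \<open>Quantifier manipulations in a structure\<close>

(* Of AA_0 the argument only uses that the meet is associative and idempotent. *)
locale band_lstr =
  fixes K :: "'a lstr"
  assumes metric: "metric_lstr K"
    and mt_assoc:
      "\<lbrakk>x \<in> carrier K; y \<in> carrier K; z \<in> carrier K\<rbrakk> \<Longrightarrow> mt K (mt K x y) z = mt K x (mt K y z)"
    and mt_idem: "x \<in> carrier K \<Longrightarrow> mt K x x = x"

lemma model_AA0_band_lstr: "model_AA0 K \<Longrightarrow> band_lstr K"
  unfolding model_AA0_def band_lstr_def AA0_def Let_def by (elim conjE) simp

context band_lstr
begin

abbreviation C where "C \<equiv> carrier K"

lemma carrier_ne: "C \<noteq> {}"
  by (rule carrier_nonempty[OF metric])

lemma mt_closed: "x \<in> C \<Longrightarrow> y \<in> C \<Longrightarrow> mt K x y \<in> C"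
  by (rule metric_lstr_closed(3)[OF metric])

lemma teval_closed: "range \<sigma> \<subseteq> C \<Longrightarrow> teval K \<sigma> t \<in> C"
  by (rule teval_in_carrier[OF metric])

lemma feval_bound: "range \<sigma> \<subseteq> C \<Longrightarrow> \<bar>feval K \<sigma> f\<bar> \<le> fm_bound f"
  by (rule feval_abs_le[OF metric])

lemma feval_upd_bound: "range \<sigma> \<subseteq> C \<Longrightarrow> a \<in> C \<Longrightarrow> \<bar>feval K (\<sigma>(x := a)) f\<bar> \<le> fm_bound f"
  by (rule feval_bound) auto

lemma feval_fquant_bounded:
  assumes "s \<noteq> x" "s \<notin> fv f" and \<sigma>: "range \<sigma> \<subseteq> C"
  shows "feval K \<sigma> (fquant b x f) = feval K \<sigma> (fquant b s (fbquant b x (Var s) f))"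
proof -
  define g where "g = (\<lambda>a. feval K (\<sigma>(x := a)) f)"
  have "feval K \<sigma> (fquant b x f) = quant b C g"
    by (simp add: feval_fquant g_def)
  also have "\<dots> = quant b C (\<lambda>a. quant b C (\<lambda>c. g (mt K c a)))"
    by (rule quant_reindex[where m = "mt K" and g = g and B = "fm_bound f",
          OF carrier_ne _ mt_closed mt_idem, symmetric])
      (use \<sigma> in \<open>auto simp: g_def feval_upd_bound\<close>)
  also have "\<dots> = feval K \<sigma> (fquant b s (fbquant b x (Var s) f))"
  proof -
    have "feval K (\<sigma>(s := a, x := u)) f = g u" for a u
      unfolding g_def by (rule feval_cong) (use assms in auto)
    then show ?thesis by (simp add: feval_fquant feval_fbquant)
  qed
  finally show ?thesis .
qed

lemma feval_fbquant_split:
  assumes "w \<notin> tvars t" "w \<noteq> x" "w \<notin> fv f" and \<sigma>: "range \<sigma> \<subseteq> C"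
  shows "feval K \<sigma> (fbquant b x t f) = feval K \<sigma> (fbquant b w t (fbquant b x (Var w) f))"
proof -
  define T where "T = teval K \<sigma> t"
  have T: "T \<in> C" unfolding T_def by (rule teval_closed[OF \<sigma>])
  define g where "g = (\<lambda>a. feval K (\<sigma>(x := mt K a T)) f)"
  have "feval K \<sigma> (fbquant b x t f) = quant b C g"
    by (simp add: feval_fbquant g_def T_def)
  also have "\<dots> = quant b C (\<lambda>a. quant b C (\<lambda>c. g (mt K c a)))"
    by (rule quant_reindex[where m = "mt K" and g = g and B = "fm_bound f",
          OF carrier_ne _ mt_closed mt_idem, symmetric])
      (use \<sigma> T in \<open>auto simp: g_def feval_upd_bound mt_closed\<close>)
  also have "\<dots> = feval K \<sigma> (fbquant b w t (fbquant b x (Var w) f))"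
  proof -
    have "feval K (\<sigma>(w := mt K a T, x := mt K c (mt K a T))) f = g (mt K c a)"
      if "a \<in> C" "c \<in> C" for a c
      unfolding g_def mt_assoc[OF that(2,1) T] by (rule feval_cong) (use assms in auto)
    then show ?thesis
      using assms(1) by (simp add: feval_fbquant teval_upd_fresh T_def cong: quant_cong)
  qed
  finally show ?thesis .
qed

lemma feval_fbquant_fquant_swap:
  assumes "s \<noteq> x" "s \<notin> tvars t" and \<sigma>: "range \<sigma> \<subseteq> C"
  shows "feval K \<sigma> (fbquant b x t (fquant b s f)) = feval K \<sigma> (fquant b s (fbquant b x t f))"
proof -
  define T where "T = teval K \<sigma> t"
  have T: "T \<in> C" unfolding T_def by (rule teval_closed[OF \<sigma>])
  have "feval K \<sigma> (fbquant b x t (fquant b s f))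
      = quant b C (\<lambda>a. quant b C (\<lambda>c. feval K (\<sigma>(x := mt K a T, s := c)) f))"
    by (simp add: feval_fquant feval_fbquant T_def)
  also have "\<dots> = quant b C (\<lambda>c. quant b C (\<lambda>a. feval K (\<sigma>(x := mt K a T, s := c)) f))"
    by (rule quant_swap[where B = "fm_bound f", OF carrier_ne carrier_ne])
      (use \<sigma> T in \<open>auto intro!: feval_bound range_upd_subset mt_closed\<close>)
  also have "\<dots> = feval K \<sigma> (fquant b s (fbquant b x t f))"
    using assms(1,2) by (simp add: feval_fquant feval_fbquant teval_upd_fresh fun_upd_twist T_def)
  finally show ?thesis .
qed

lemma feval_FAdd_fquant:
  assumes "s \<notin> fv h" and "range \<sigma> \<subseteq> C"
  shows "feval K \<sigma> (FAdd (fquant b s f) h) = feval K \<sigma> (fquant b s (FAdd f h))"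
  using quant_add_const[OF carrier_ne feval_upd_bound[OF assms(2)]] assms(1)
  by (simp add: feval_fquant feval_upd_fresh)

lemma feval_FScal_fquant:
  assumes "range \<sigma> \<subseteq> C"
  shows "feval K \<sigma> (FScal r (fquant b s f))
    = feval K \<sigma> (fquant (if 0 \<le> r then b else \<not> b) s (FScal r f))"
  using quant_scale[OF carrier_ne feval_upd_bound[OF assms]] by (simp add: feval_fquant)

(* The collection axiom for ys = [s]; its bound must be a variable, so t is named by a fresh y. *)
lemma feval_collection_inf_sup:
  assumes coll: "collection K" and "x \<noteq> s" "s' \<notin> fv f" "s' \<noteq> x" "s' \<noteq> s" "s' \<notin> tvars t"
    and \<sigma>: "range \<sigma> \<subseteq> C"
  shows "feval K \<sigma> (fbquant False x t (fquant True s f))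
    = feval K \<sigma> (fquant True s' (fbquant False x t (fbquant True s (Var s') f)))"
proof -
  have "finite (fv f \<union> tvars t \<union> {x, s, s'})" by (simp add: finite_fv finite_tvars)
  then obtain y where y: "y \<notin> fv f \<union> tvars t \<union> {x, s, s'}" by (rule fresh_var)
  define T where "T = teval K \<sigma> t"
  have "x \<notin> set [s] \<and> y \<noteq> x \<and> y \<notin> set [s] \<and> y \<notin> fv f \<and> s' \<noteq> x \<and> s' \<noteq> y \<and>
      s' \<notin> set [s] \<and> s' \<notin> fv f \<and> range (\<sigma>(y := T)) \<subseteq> C"
    using y assms(2-5) range_upd_subset[OF \<sigma> teval_closed[OF \<sigma>]] by (simp add: T_def)
  then have "feval K (\<sigma>(y := T)) (FBInf x (Var y) (sups [s] f))
      = feval K (\<sigma>(y := T)) (FSup s' (FBInf x (Var y) (bsups [s] s' f)))"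
    by (rule coll[unfolded collection_def, rule_format,
          where \<phi> = f and x = x and ys = "[s]" and t = y and s = s' and \<sigma> = "\<sigma>(y := T)"])
  then have coll_y: "feval K (\<sigma>(y := T)) (fbquant False x (Var y) (fquant True s f))
      = feval K (\<sigma>(y := T)) (fquant True s' (fbquant False x (Var y) (fbquant True s (Var s') f)))"
    by (simp only: sups_def bsups_def foldr.simps o_apply id_apply fquant_def fbquant_def
        if_True if_False)
  have "feval K (\<sigma>(y := T)) (fbquant False x (Var y) (fquant True s f))
      = feval K \<sigma> (fbquant False x t (fquant True s f))"
    unfolding T_def by (rule feval_fbquant_Var) (use y in auto)
  moreover have "feval K (\<sigma>(y := T, s' := a)) (fbquant False x (Var y) (fbquant True s (Var s') f))
      = feval K (\<sigma>(s' := a)) (fbquant False x t (fbquant True s (Var s') f))" for a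
  proof -
    have "\<sigma>(y := T, s' := a) = \<sigma>(s' := a, y := teval K (\<sigma>(s' := a)) t)"
      by (rule ext) (use y in \<open>simp add: T_def teval_upd_fresh[OF assms(6)]\<close>)
    then show ?thesis by (simp only:) (rule feval_fbquant_Var, use y in auto)
  qed
  ultimately show ?thesis using coll_y by (simp only: feval_fquant)
qed

lemma feval_collection:
  assumes "collection K" and "x \<noteq> s" "s' \<notin> fv f" "s' \<noteq> x" "s' \<noteq> s" "s' \<notin> tvars t"
    and "range \<sigma> \<subseteq> C"
  shows "feval K \<sigma> (fbquant b x t (fquant (\<not> b) s f))
    = feval K \<sigma> (fquant (\<not> b) s' (fbquant b x t (fbquant (\<not> b) s (Var s') f)))"
proof (cases b)
  case False
  then show ?thesis using feval_collection_inf_sup[OF assms] by simp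
next
  case True
  have "s' \<notin> fv (FScal (-1) f)" using assms(3) by simp
  from feval_collection_inf_sup[OF assms(1,2) this assms(4-7)] True show ?thesis
    by (simp add: feval_fquant feval_fbquant quant_False)
qed

lemma le_pol_feval_upd_upd:
  assumes IH: "\<And>\<rho>. x \<noteq> v \<Longrightarrow> range \<rho> \<subseteq> C \<Longrightarrow> le_pol p (feval K (\<rho>(v := a)) f) (feval K (\<rho>(v := b)) f)"
    and "range \<sigma> \<subseteq> C" "w \<in> C"
  shows "le_pol p (feval K (\<sigma>(v := a, x := w)) f) (feval K (\<sigma>(v := b, x := w)) f)"
proof (cases "x = v")
  case False
  then show ?thesis using IH[of "\<sigma>(x := w)"] assms(2,3) by (auto simp: fun_upd_twist)
qed simp

lemma le_pol_quant_upd: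
  assumes IH: "\<And>\<rho>. x \<noteq> v \<Longrightarrow> range \<rho> \<subseteq> C \<Longrightarrow> le_pol p (feval K (\<rho>(v := a)) f) (feval K (\<rho>(v := b)) f)"
    and "a \<in> C" "b \<in> C" "range \<sigma> \<subseteq> C" and h: "\<And>c. c \<in> C \<Longrightarrow> h c \<in> C"
  shows "le_pol p (quant c C (\<lambda>w. feval K (\<sigma>(v := a, x := h w)) f))
    (quant c C (\<lambda>w. feval K (\<sigma>(v := b, x := h w)) f))"
  using assms
  by (intro quant_mono[where B = "fm_bound f", OF carrier_ne] le_pol_feval_upd_upd feval_bound
      range_upd_subset) auto

lemma le_pol_feval_fquant:
  assumes IH: "\<And>\<rho>. x \<noteq> v \<Longrightarrow> range \<rho> \<subseteq> C \<Longrightarrow> le_pol p (feval K (\<rho>(v := a)) f) (feval K (\<rho>(v := b)) f)"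
    and "a \<in> C" "b \<in> C" "range \<sigma> \<subseteq> C"
  shows "le_pol p (feval K (\<sigma>(v := a)) (fquant c x f)) (feval K (\<sigma>(v := b)) (fquant c x f))"
  using le_pol_quant_upd[where h = "\<lambda>w. w", OF assms] by (simp add: feval_fquant)

lemma le_pol_feval_fbquant:
  assumes IH: "\<And>\<rho>. x \<noteq> v \<Longrightarrow> range \<rho> \<subseteq> C \<Longrightarrow> le_pol p (feval K (\<rho>(v := a)) f) (feval K (\<rho>(v := b)) f)"
    and a: "a \<in> C" and b: "b \<in> C" and ab: "mt K a b = a" and \<sigma>: "range \<sigma> \<subseteq> C"
    and t: "if t = Var v then p = c else v \<notin> tvars t"
  shows "le_pol p (feval K (\<sigma>(v := a)) (fbquant c x t f)) (feval K (\<sigma>(v := b)) (fbquant c x t f))"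
proof (cases "t = Var v")
  case True
  have "le_pol p (quant p C (\<lambda>c. feval K (\<sigma>(v := a, x := mt K c a)) f))
      (quant p C (\<lambda>c. feval K (\<sigma>(v := b, x := mt K c b)) f))"
  proof (rule le_pol_quant[OF carrier_ne])
    show "\<bar>feval K (\<sigma>(v := b, x := mt K c b)) f\<bar> \<le> fm_bound f" if "c \<in> C" for c
      using that b \<sigma> by (intro feval_bound range_upd_subset mt_closed)
    fix c assume c: "c \<in> C"
    have "mt K (mt K c a) b = mt K c a" using mt_assoc[OF c a b] ab by simp
    then have "le_pol p (feval K (\<sigma>(v := a, x := mt K c a)) f)
        (feval K (\<sigma>(v := b, x := mt K (mt K c a) b)) f)"
      using le_pol_feval_upd_upd[OF IH \<sigma> mt_closed[OF c a]] by simp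
    then show "\<exists>d\<in>C. le_pol p (feval K (\<sigma>(v := a, x := mt K c a)) f)
        (feval K (\<sigma>(v := b, x := mt K d b)) f)"
      using mt_closed[OF c a] by blast
  qed
  then show ?thesis using True t by (simp add: feval_fbquant)
next
  case False
  with t have "teval K (\<sigma>(v := d)) t = teval K \<sigma> t" for d
    by (simp add: teval_upd_fresh)
  with le_pol_quant_upd[OF IH a b \<sigma> mt_closed[OF _ teval_closed[OF \<sigma>]]]
  show ?thesis by (simp add: feval_fbquant)
qed

lemma feval_monotone_in:
  assumes a: "a \<in> C" and b: "b \<in> C" and ab: "mt K a b = a"
  shows "monotone_in p v f \<Longrightarrow> range \<sigma> \<subseteq> C
    \<Longrightarrow> le_pol p (feval K (\<sigma>(v := a)) f) (feval K (\<sigma>(v := b)) f)"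
proof (induction f arbitrary: \<sigma> p)
  case (FDist s t)
  then have "teval K (\<sigma>(v := c)) s = teval K \<sigma> s" "teval K (\<sigma>(v := c)) t = teval K \<sigma> t" for c
    by (simp_all add: teval_upd_fresh)
  then show ?case by (simp only: feval.simps le_pol_refl)
next
  case (FAdd f g)
  then show ?case by (simp add: le_pol_add)
next
  case (FScal r f)
  then show ?case by (simp add: le_pol_scale)
next
  case (FSup x f)
  have IH: "\<And>\<rho>. x \<noteq> v \<Longrightarrow> range \<rho> \<subseteq> C \<Longrightarrow> le_pol p (feval K (\<rho>(v := a)) f) (feval K (\<rho>(v := b)) f)"
    by (rule FSup.IH) (use FSup.prems(1) in auto)
  have "le_pol p (feval K (\<sigma>(v := a)) (fquant True x f)) (feval K (\<sigma>(v := b)) (fquant True x f))"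
    by (rule le_pol_feval_fquant) (use IH a b FSup.prems in simp_all)
  then show ?case by (simp only: fquant_def if_True if_False)
next
  case (FInf x f)
  have IH: "\<And>\<rho>. x \<noteq> v \<Longrightarrow> range \<rho> \<subseteq> C \<Longrightarrow> le_pol p (feval K (\<rho>(v := a)) f) (feval K (\<rho>(v := b)) f)"
    by (rule FInf.IH) (use FInf.prems(1) in auto)
  have "le_pol p (feval K (\<sigma>(v := a)) (fquant False x f)) (feval K (\<sigma>(v := b)) (fquant False x f))"
    by (rule le_pol_feval_fquant) (use IH a b FInf.prems in simp_all)
  then show ?case by (simp only: fquant_def if_True if_False)
next
  case (FBSup x t f)
  have IH: "\<And>\<rho>. x \<noteq> v \<Longrightarrow> range \<rho> \<subseteq> C \<Longrightarrow> le_pol p (feval K (\<rho>(v := a)) f) (feval K (\<rho>(v := b)) f)"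
    by (rule FBSup.IH) (use FBSup.prems(1) in \<open>auto split: if_splits\<close>)
  have "le_pol p (feval K (\<sigma>(v := a)) (fbquant True x t f))
      (feval K (\<sigma>(v := b)) (fbquant True x t f))"
    by (rule le_pol_feval_fbquant) (use IH a b ab FBSup.prems in simp_all)
  then show ?case by (simp only: fbquant_def if_True if_False)
next
  case (FBInf x t f)
  have IH: "\<And>\<rho>. x \<noteq> v \<Longrightarrow> range \<rho> \<subseteq> C \<Longrightarrow> le_pol p (feval K (\<rho>(v := a)) f) (feval K (\<rho>(v := b)) f)"
    by (rule FBInf.IH) (use FBInf.prems(1) in \<open>auto split: if_splits\<close>)
  have "le_pol p (feval K (\<sigma>(v := a)) (fbquant False x t f))
      (feval K (\<sigma>(v := b)) (fbquant False x t f))"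
    by (rule le_pol_feval_fbquant) (use IH a b ab FBInf.prems in simp_all)
  then show ?case by (simp only: fbquant_def if_True if_False)
qed simp

end

section \<open>Monotone prenex forms\<close>

(* Equivalence is taken over a class of structures, so that one prenex form serves for both
   M and N. *)
locale collection_class =
  fixes \<K> :: "'a lstr set"
  assumes band: "K \<in> \<K> \<Longrightarrow> band_lstr K"
    and coll: "K \<in> \<K> \<Longrightarrow> collection K"
begin

definition fm_equiv :: "fm \<Rightarrow> fm \<Rightarrow> bool" (infix "\<approx>" 50) where
  "f \<approx> g \<longleftrightarrow> (\<forall>K\<in>\<K>. \<forall>\<sigma>. range \<sigma> \<subseteq> carrier K \<longrightarrow> feval K \<sigma> f = feval K \<sigma> g)"

lemma fm_equivI:
  "(\<And>K \<sigma>. K \<in> \<K> \<Longrightarrow> range \<sigma> \<subseteq> carrier K \<Longrightarrow> feval K \<sigma> f = feval K \<sigma> g) \<Longrightarrow> f \<approx> g"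
  by (simp add: fm_equiv_def)

lemma fm_equivD: "f \<approx> g \<Longrightarrow> K \<in> \<K> \<Longrightarrow> range \<sigma> \<subseteq> carrier K \<Longrightarrow> feval K \<sigma> f = feval K \<sigma> g"
  by (simp add: fm_equiv_def)

lemma fm_equiv_refl [simp]: "f \<approx> f"
  by (simp add: fm_equiv_def)

lemma fm_equiv_trans [trans]: "f \<approx> g \<Longrightarrow> g \<approx> h \<Longrightarrow> f \<approx> h"
  by (simp add: fm_equiv_def)

lemma fm_equiv_FAdd: "f \<approx> f' \<Longrightarrow> g \<approx> g' \<Longrightarrow> FAdd f g \<approx> FAdd f' g'"
  by (simp add: fm_equiv_def)

lemma fm_equiv_FAdd_commute: "FAdd f g \<approx> FAdd g f"
  by (simp add: fm_equiv_def)

lemma fm_equiv_FScal: "f \<approx> g \<Longrightarrow> FScal r f \<approx> FScal r g"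
  by (simp add: fm_equiv_def)

lemma fm_equiv_fquant: "f \<approx> g \<Longrightarrow> fquant b x f \<approx> fquant b x g"
  by (intro fm_equivI) (auto simp: feval_fquant intro!: quant_cong fm_equivD range_upd_subset)

lemma fm_equiv_fbquant: "f \<approx> g \<Longrightarrow> fbquant b x t f \<approx> fbquant b x t g"
proof (rule fm_equivI)
  fix K and \<sigma> :: "nat \<Rightarrow> 'a"
  assume K: "K \<in> \<K>" and \<sigma>: "range \<sigma> \<subseteq> carrier K" and "f \<approx> g"
  interpret band_lstr K by (rule band[OF K])
  show "feval K \<sigma> (fbquant b x t f) = feval K \<sigma> (fbquant b x t g)"
    unfolding feval_fbquant using \<open>f \<approx> g\<close> K \<sigma>
    by (intro quant_cong fm_equivD range_upd_subset mt_closed teval_closed)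
qed

lemma fm_equiv_prenex: "f \<approx> g \<Longrightarrow> prenex q f \<approx> prenex q g"
  by (induction q) (auto intro: fm_equiv_fquant)

lemma fquant_equiv_bounded: "s \<noteq> x \<Longrightarrow> s \<notin> fv f \<Longrightarrow> fquant b x f \<approx> fquant b s (fbquant b x (Var s) f)"
  by (intro fm_equivI band_lstr.feval_fquant_bounded[OF band])

lemma fbquant_equiv_split:
  "w \<notin> tvars t \<Longrightarrow> w \<noteq> x \<Longrightarrow> w \<notin> fv f \<Longrightarrow> fbquant b x t f \<approx> fbquant b w t (fbquant b x (Var w) f)"
  by (intro fm_equivI band_lstr.feval_fbquant_split[OF band])

lemma fbquant_fquant_swap:
  "s \<noteq> x \<Longrightarrow> s \<notin> tvars t \<Longrightarrow> fbquant b x t (fquant b s f) \<approx> fquant b s (fbquant b x t f)"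
  by (intro fm_equivI band_lstr.feval_fbquant_fquant_swap[OF band])

lemma fbquant_fquant_collection:
  "x \<noteq> s \<Longrightarrow> s' \<notin> fv f \<Longrightarrow> s' \<noteq> x \<Longrightarrow> s' \<noteq> s \<Longrightarrow> s' \<notin> tvars t \<Longrightarrow>
    fbquant b x t (fquant (\<not> b) s f) \<approx> fquant (\<not> b) s' (fbquant b x t (fbquant (\<not> b) s (Var s') f))"
  by (intro fm_equivI band_lstr.feval_collection[OF band] coll)

lemma FAdd_prenex_left: "set (map snd q) \<inter> fv h = {} \<Longrightarrow> FAdd (prenex q f) h \<approx> prenex q (FAdd f h)"
proof (induction q)
  case (Cons p q)
  obtain b s where p: "p = (b, s)" by fastforce
  have "FAdd (fquant b s (prenex q f)) h \<approx> fquant b s (FAdd (prenex q f) h)"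
    by (rule fm_equivI, rule band_lstr.feval_FAdd_fquant[OF band]) (use Cons.prems p in auto)
  also have "\<dots> \<approx> fquant b s (prenex q (FAdd f h))"
    using Cons p by (auto intro: fm_equiv_fquant)
  finally show ?case using p by simp
qed simp

lemma FAdd_prenex_right: "set (map snd q) \<inter> fv h = {} \<Longrightarrow> FAdd h (prenex q f) \<approx> prenex q (FAdd h f)"
proof -
  assume q: "set (map snd q) \<inter> fv h = {}"
  have "FAdd h (prenex q f) \<approx> FAdd (prenex q f) h" by (rule fm_equiv_FAdd_commute)
  also have "\<dots> \<approx> prenex q (FAdd f h)" by (rule FAdd_prenex_left[OF q])
  also have "\<dots> \<approx> prenex q (FAdd h f)" by (intro fm_equiv_prenex fm_equiv_FAdd_commute)
  finally show ?thesis .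
qed

lemma FScal_prenex:
  "FScal r (prenex q f) \<approx> prenex (map (apfst (\<lambda>b. if 0 \<le> r then b else \<not> b)) q) (FScal r f)"
proof (induction q)
  case (Cons p q)
  obtain b s where p: "p = (b, s)" by fastforce
  have "FScal r (fquant b s (prenex q f))
      \<approx> fquant (if 0 \<le> r then b else \<not> b) s (FScal r (prenex q f))"
    by (rule fm_equivI, rule band_lstr.feval_FScal_fquant[OF band])
  also have "\<dots> \<approx> fquant (if 0 \<le> r then b else \<not> b) s
      (prenex (map (apfst (\<lambda>b. if 0 \<le> r then b else \<not> b)) q) (FScal r f))"
    using Cons by (rule fm_equiv_fquant)
  finally show ?case using p by simp
qed simp

definition prenex_form :: "nat set \<Rightarrow> fm \<Rightarrow> (bool \<times> nat) list \<Rightarrow> fm \<Rightarrow> bool" where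
  "prenex_form A f q \<theta> \<longleftrightarrow> monotone_prenex q \<theta> \<and> set (map snd q) \<inter> A = {} \<and>
     fv (prenex q \<theta>) \<subseteq> fv f \<and> f \<approx> prenex q \<theta>"

(* The variables in A are quantified further out: pushing a bounded quantifier inwards must
   preserve their monotonicity. *)
definition prenexable :: "nat set \<Rightarrow> fm \<Rightarrow> nat \<Rightarrow> bool" where
  "prenexable A f n \<longleftrightarrow>
     (\<exists>q \<theta>. length q = n \<and> prenex_form A f q \<theta> \<and> keeps_monotone A f \<theta>)"

lemma prenex_form_equiv: "prenex_form A g q \<theta> \<Longrightarrow> f \<approx> g \<Longrightarrow> fv g \<subseteq> fv f \<Longrightarrow> prenex_form A f q \<theta>"
  unfolding prenex_form_def by (blast intro: fm_equiv_trans)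

lemma prenex_form_Cons:
  assumes pf: "prenex_form A' g q \<theta>" and keep: "keeps_monotone A' g \<theta>" and mono: "monotone_in c s g"
    and "s \<in> A'" "A \<subseteq> A'" "s \<notin> A"
    and eq: "f \<approx> fquant c s g" and fv: "fv g - {s} \<subseteq> fv f"
  shows "prenex_form A f ((c, s) # q) \<theta>"
proof -
  have "monotone_in c s \<theta>" using keep mono \<open>s \<in> A'\<close> by (simp add: keeps_monotone_def)
  moreover have "f \<approx> prenex ((c, s) # q) \<theta>"
    using eq fm_equiv_fquant pf by (auto simp: prenex_form_def intro: fm_equiv_trans)
  ultimately show ?thesis
    using pf assms(4-6) fv by (auto simp: prenex_form_def monotone_prenex_def)
qed

lemma prenexable_Cons:
  assumes "prenex_form A' g q \<theta>" "keeps_monotone A' g \<theta>" "monotone_in c s g"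
    "s \<in> A'" "A \<subseteq> A'" "s \<notin> A" "f \<approx> fquant c s g" "fv g - {s} \<subseteq> fv f"
    and "keeps_monotone A f g"
  shows "prenexable A f (Suc (length q))"
  unfolding prenexable_def
proof (intro exI conjI)
  show "prenex_form A f ((c, s) # q) \<theta>" by (rule prenex_form_Cons[OF assms(1-8)])
  show "keeps_monotone A f \<theta>" by (rule keeps_monotone_trans[OF assms(9,2,5)])
qed simp

(* Indexed by the length of the prefix, because the alternating case recurses on the prefix
   produced by a first recursive call. *)
definition pushable :: "nat \<Rightarrow> bool" where
  "pushable n \<longleftrightarrow> (\<forall>q \<theta> A b x t. length q = n \<and> monotone_prenex q \<theta> \<and> finite A \<and>
     x \<notin> tvars t \<and> x \<notin> set (map snd q) \<and> set (map snd q) \<inter> (tvars t \<union> A) = {} \<longrightarrow>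
     prenexable A (fbquant b x t (prenex q \<theta>)) n)"

lemma pushableD:
  assumes "pushable (length q)" "monotone_prenex q \<theta>" "finite A" "x \<notin> tvars t"
    "x \<notin> set (map snd q)" "set (map snd q) \<inter> (tvars t \<union> A) = {}"
  obtains q' \<theta>' where "length q' = length q" "prenex_form A (fbquant b x t (prenex q \<theta>)) q' \<theta>'"
    "keeps_monotone A (fbquant b x t (prenex q \<theta>)) \<theta>'"
  using assms unfolding pushable_def prenexable_def by blast

lemma pushable_0: "pushable 0"
  unfolding pushable_def prenexable_def
proof (intro allI impI)
  fix q \<theta> A b x t
  assume "length q = 0 \<and> monotone_prenex q \<theta> \<and> finite A \<and> x \<notin> tvars t \<and> x \<notin> set (map snd q) \<and>
    set (map snd q) \<inter> (tvars t \<union> A) = {}"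
  then show "\<exists>q' \<theta>'. length q' = 0 \<and> prenex_form A (fbquant b x t (prenex q \<theta>)) q' \<theta>' \<and>
    keeps_monotone A (fbquant b x t (prenex q \<theta>)) \<theta>'"
    by (intro exI[of _ "[]"] exI[of _ "fbquant b x t \<theta>"])
      (auto simp: prenex_form_def monotone_prenex_def keeps_monotone_def)
qed

lemma push_Cons_same:
  assumes IH: "pushable (length r)" and mp: "monotone_prenex ((b, s) # r) \<theta>" and A: "finite A"
    and x: "x \<notin> tvars t" "x \<notin> set (map snd ((b, s) # r))"
    and disj: "set (map snd ((b, s) # r)) \<inter> (tvars t \<union> A) = {}"
  shows "prenexable A (fbquant b x t (prenex ((b, s) # r) \<theta>)) (Suc (length r))"
proof -
  let ?F = "fbquant b x t (prenex ((b, s) # r) \<theta>)" and ?G = "fbquant b x t (prenex r \<theta>)"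
  have s: "s \<notin> set (map snd r)" "s \<noteq> x" "s \<notin> tvars t" "s \<notin> A" "monotone_in b s \<theta>"
    using mp x disj by (auto simp: monotone_prenex_def)
  have "monotone_prenex r \<theta>" using mp by (simp add: monotone_prenex_def)
  then obtain r' \<theta>' where r': "length r' = length r" "prenex_form (A \<union> {s}) ?G r' \<theta>'"
      "keeps_monotone (A \<union> {s}) ?G \<theta>'"
    by (rule pushableD[OF IH, where A = "A \<union> {s}" and b = b and x = x and t = t])
      (use A x disj s in auto)
  have eq: "?F \<approx> fquant b s ?G" using s by (simp add: fbquant_fquant_swap)
  have mono: "monotone_in b s ?G" using s by (auto intro: monotone_in_prenex)
  have keep: "keeps_monotone A ?F ?G" using s by (auto simp: keeps_monotone_def)
  show ?thesis
    using prenexable_Cons[OF r'(2,3) mono _ _ _ eq _ keep] s r'(1) by auto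
qed

lemma push_Cons_alt:
  assumes IH: "pushable (length r)" and mp: "monotone_prenex ((\<not> b, s) # r) \<theta>" and A: "finite A"
    and x: "x \<notin> tvars t" "x \<notin> set (map snd ((\<not> b, s) # r))"
    and disj: "set (map snd ((\<not> b, s) # r)) \<inter> (tvars t \<union> A) = {}"
  shows "prenexable A (fbquant b x t (prenex ((\<not> b, s) # r) \<theta>)) (Suc (length r))"
proof -
  let ?F = "fbquant b x t (prenex ((\<not> b, s) # r) \<theta>)"
  have s: "s \<notin> set (map snd r)" "s \<noteq> x" "s \<notin> tvars t" "s \<notin> A"
    using mp x disj by (auto simp: monotone_prenex_def)
  have mp_r: "monotone_prenex r \<theta>" using mp by (simp add: monotone_prenex_def)
  have "finite (A \<union> {x, s} \<union> tvars t \<union> set (map snd r) \<union> fv (prenex r \<theta>))"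
    using A by (simp add: finite_tvars finite_fv)
  then obtain s' where s': "s' \<notin> A \<union> {x, s} \<union> tvars t \<union> set (map snd r) \<union> fv (prenex r \<theta>)"
    by (rule fresh_var)
  define A1 where "A1 = A \<union> {s', x} \<union> tvars t"
  let ?H = "fbquant (\<not> b) s (Var s') (prenex r \<theta>)"
  obtain r1 \<theta>1 where r1: "length r1 = length r" "prenex_form A1 ?H r1 \<theta>1" "keeps_monotone A1 ?H \<theta>1"
    by (rule pushableD[OF IH mp_r, where A = A1 and b = "\<not> b" and x = s and t = "Var s'"])
      (use A x disj s s' in \<open>auto simp: A1_def finite_tvars\<close>)
  let ?G = "fbquant b x t (prenex r1 \<theta>1)"
  have mp_r1: "monotone_prenex r1 \<theta>1" and r1_A1: "set (map snd r1) \<inter> A1 = {}"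
    using r1(2) by (simp_all add: prenex_form_def)
  obtain r2 \<theta>2 where r2: "length r2 = length r" "prenex_form (A \<union> {s'}) ?G r2 \<theta>2"
      "keeps_monotone (A \<union> {s'}) ?G \<theta>2"
  proof (rule pushableD[OF _ mp_r1, where A = "A \<union> {s'}" and b = b and x = x and t = t])
    show "pushable (length r1)" using IH r1(1) by simp
  qed (use r1_A1 r1(1) A x in \<open>auto simp: A1_def\<close>)
  have "?F \<approx> fquant (\<not> b) s' (fbquant b x t ?H)"
    using s s' by (simp add: fbquant_fquant_collection)
  also have "\<dots> \<approx> fquant (\<not> b) s' ?G"
    using r1(2) by (intro fm_equiv_fquant fm_equiv_fbquant) (simp add: prenex_form_def)
  finally have eq: "?F \<approx> fquant (\<not> b) s' ?G" .
  have mono: "monotone_in (\<not> b) s' ?G"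
  proof -
    have "monotone_in (\<not> b) s' ?H" using s' by (simp add: monotone_in_fresh)
    then have "monotone_in (\<not> b) s' \<theta>1" using r1(3) by (simp add: keeps_monotone_def A1_def)
    then show ?thesis using s' by (auto intro: monotone_in_prenex)
  qed
  have keep: "keeps_monotone A ?F ?G"
    unfolding keeps_monotone_def
  proof (intro ballI allI impI)
    fix v p assume v: "v \<in> A" and "monotone_in p v ?F"
    then have "monotone_in p v ?H \<longrightarrow> monotone_in p v \<theta>1" "v \<noteq> s" "v \<noteq> s'"
      using r1(3) s s' by (auto simp: keeps_monotone_def A1_def)
    with \<open>monotone_in p v ?F\<close> show "monotone_in p v ?G" by (auto intro: monotone_in_prenex)
  qed
  have "fv ?G - {s'} \<subseteq> fv ?F"
    using r1(2) by (auto simp: prenex_form_def)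
  then show ?thesis
    using prenexable_Cons[OF r2(2,3) mono _ _ _ eq _ keep] s' r2(1) by auto
qed

lemma pushable_Suc: "pushable n \<Longrightarrow> pushable (Suc n)"
  unfolding pushable_def[of "Suc n"]
proof (intro allI impI)
  fix q \<theta> A b x t assume "pushable n" and H: "length q = Suc n \<and> monotone_prenex q \<theta> \<and> finite A \<and>
    x \<notin> tvars t \<and> x \<notin> set (map snd q) \<and> set (map snd q) \<inter> (tvars t \<union> A) = {}"
  then obtain c s r where q: "q = (c, s) # r" and r: "length r = n" by (cases q) auto
  show "prenexable A (fbquant b x t (prenex q \<theta>)) (Suc n)"
  proof (cases "c = b")
    case True
    with push_Cons_same[of r b s \<theta> A x t] show ?thesis using \<open>pushable n\<close> H q r by simp
  next
    case False
    then have "c = (\<not> b)" by blast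
    with push_Cons_alt[of r b s \<theta> A x t] show ?thesis using \<open>pushable n\<close> H q r by simp
  qed
qed

lemma push_fbquant:
  assumes "monotone_prenex q \<theta>" "finite A" "x \<notin> tvars t" "x \<notin> set (map snd q)"
    "set (map snd q) \<inter> (tvars t \<union> A) = {}"
  obtains q' \<theta>' where "prenex_form A (fbquant b x t (prenex q \<theta>)) q' \<theta>'"
    "keeps_monotone A (fbquant b x t (prenex q \<theta>)) \<theta>'"
proof -
  have "pushable n" for n by (induction n) (simp_all add: pushable_0 pushable_Suc)
  then show ?thesis by (rule pushableD[OF _ assms, where b = b]) (rule that)
qed

lemma prenex_form_FAdd:
  assumes IHf: "\<And>A. finite A \<Longrightarrow> \<exists>q \<theta>. prenex_form A f q \<theta>"
    and IHg: "\<And>A. finite A \<Longrightarrow> \<exists>q \<theta>. prenex_form A g q \<theta>" and A: "finite A"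
  shows "\<exists>q \<theta>. prenex_form A (FAdd f g) q \<theta>"
proof -
  obtain q1 \<theta>1 where n1: "prenex_form (A \<union> fv g) f q1 \<theta>1"
    using IHf[of "A \<union> fv g"] A by (auto simp: finite_fv)
  obtain q2 \<theta>2 where n2: "prenex_form (A \<union> fv f \<union> set (map snd q1)) g q2 \<theta>2"
    using IHg[of "A \<union> fv f \<union> set (map snd q1)"] A by (auto simp: finite_fv)
  have fv1: "fv \<theta>1 \<subseteq> fv f \<union> set (map snd q1)" and fv2: "fv \<theta>2 \<subseteq> fv g \<union> set (map snd q2)"
    using n1 n2 by (auto simp: prenex_form_def fv_prenex)
  have d1: "set (map snd q1) \<inter> fv g = {}"
    and d2: "set (map snd q2) \<inter> (fv f \<union> set (map snd q1)) = {}"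
    using n1 n2 by (auto simp: prenex_form_def)
  have "FAdd f g \<approx> FAdd (prenex q1 \<theta>1) (prenex q2 \<theta>2)"
    using n1 n2 by (intro fm_equiv_FAdd) (simp_all add: prenex_form_def)
  also have "\<dots> \<approx> prenex q1 (FAdd \<theta>1 (prenex q2 \<theta>2))"
    using d1 n2 by (intro FAdd_prenex_left) (auto simp: prenex_form_def)
  also have "\<dots> \<approx> prenex q1 (prenex q2 (FAdd \<theta>1 \<theta>2))"
    using d2 fv1 by (intro fm_equiv_prenex FAdd_prenex_right) auto
  finally have eq: "FAdd f g \<approx> prenex (q1 @ q2) (FAdd \<theta>1 \<theta>2)" by (simp add: prenex_append)
  have "monotone_in c s (FAdd \<theta>1 \<theta>2)" if "(c, s) \<in> set (q1 @ q2)" for c s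
  proof (cases "(c, s) \<in> set q1")
    case True
    then have "s \<notin> fv \<theta>2" using fv2 d1 d2 by force
    then show ?thesis
      using True n1 by (auto simp: prenex_form_def monotone_prenex_def monotone_in_fresh)
  next
    case False
    then have q2: "(c, s) \<in> set q2" using that by simp
    then have "s \<notin> fv \<theta>1" using fv1 d2 by force
    then show ?thesis
      using q2 n2 by (auto simp: prenex_form_def monotone_prenex_def monotone_in_fresh)
  qed
  then have "prenex_form A (FAdd f g) (q1 @ q2) (FAdd \<theta>1 \<theta>2)"
    using n1 n2 d2 eq by (auto simp: prenex_form_def monotone_prenex_def fv_prenex)
  then show ?thesis by blast
qed

lemma prenex_form_FScal:
  assumes pf: "prenex_form A f q \<theta>"
  shows "prenex_form A (FScal r f) (map (apfst (\<lambda>b. if 0 \<le> r then b else \<not> b)) q) (FScal r \<theta>)"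
  unfolding prenex_form_def monotone_prenex_def
proof (intro conjI)
  have "FScal r f \<approx> FScal r (prenex q \<theta>)"
    using pf by (intro fm_equiv_FScal) (simp add: prenex_form_def)
  also have "\<dots> \<approx> prenex (map (apfst (\<lambda>b. if 0 \<le> r then b else \<not> b)) q) (FScal r \<theta>)"
    by (rule FScal_prenex)
  finally show "FScal r f \<approx> prenex (map (apfst (\<lambda>b. if 0 \<le> r then b else \<not> b)) q) (FScal r \<theta>)" .
  have "monotone_in (if 0 \<le> r then c else \<not> c) s (FScal r \<theta>)" if "(c, s) \<in> set q" for c s
    using pf that by (auto simp: prenex_form_def monotone_prenex_def)
  then show "\<forall>(c, s)\<in>set (map (apfst (\<lambda>b. if 0 \<le> r then b else \<not> b)) q).
      monotone_in c s (FScal r \<theta>)"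
    by auto
qed (use pf in \<open>auto simp: prenex_form_def monotone_prenex_def fv_prenex\<close>)

lemma prenex_form_fquant:
  assumes IH: "\<And>A. finite A \<Longrightarrow> \<exists>q \<theta>. prenex_form A f q \<theta>" and A: "finite A"
  shows "\<exists>q \<theta>. prenex_form A (fquant b x f) q \<theta>"
proof -
  obtain q \<theta> where nf: "prenex_form (A \<union> {x}) f q \<theta>" using IH[of "A \<union> {x}"] A by auto
  have "finite (A \<union> {x} \<union> set (map snd q) \<union> fv f)" using A by (simp add: finite_fv)
  then obtain s where s: "s \<notin> A \<union> {x} \<union> set (map snd q) \<union> fv f" by (rule fresh_var)
  have s_fv: "s \<notin> fv (prenex q \<theta>)" using s nf by (auto simp: prenex_form_def)
  let ?G = "fbquant b x (Var s) (prenex q \<theta>)"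
  obtain q' \<theta>' where pf: "prenex_form (A \<union> {s}) ?G q' \<theta>'" and keep: "keeps_monotone (A \<union> {s}) ?G \<theta>'"
    by (rule push_fbquant[where A = "A \<union> {s}" and b = b and x = x and t = "Var s"])
      (use nf A s in \<open>auto simp: prenex_form_def\<close>)
  have "fquant b x f \<approx> fquant b x (prenex q \<theta>)"
    using nf by (intro fm_equiv_fquant) (simp add: prenex_form_def)
  also have "\<dots> \<approx> fquant b s ?G"
    using s s_fv by (intro fquant_equiv_bounded) auto
  finally have "prenex_form A (fquant b x f) ((b, s) # q') \<theta>'"
    using s s_fv nf
    by (intro prenex_form_Cons[OF pf keep]) (auto simp: monotone_in_fresh prenex_form_def)
  then show ?thesis by blast
qed

(* t may contain x; splitting the bound as w \<le> t, x \<le> w with w fresh makes both bounded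
   quantifiers Sigma_0. *)
lemma prenex_form_fbquant:
  assumes IH: "\<And>A. finite A \<Longrightarrow> \<exists>q \<theta>. prenex_form A f q \<theta>" and A: "finite A"
  shows "\<exists>q \<theta>. prenex_form A (fbquant b x t f) q \<theta>"
proof -
  have "finite (A \<union> tvars t \<union> {x} \<union> fv f)" using A by (simp add: finite_fv finite_tvars)
  then obtain w where w: "w \<notin> A \<union> tvars t \<union> {x} \<union> fv f" by (rule fresh_var)
  obtain q \<theta> where nf: "prenex_form (A \<union> {x, w} \<union> tvars t) f q \<theta>"
    using IH[of "A \<union> {x, w} \<union> tvars t"] A by (auto simp: finite_tvars)
  have w_fv: "w \<notin> fv (prenex q \<theta>)" using w nf by (auto simp: prenex_form_def)
  obtain q1 \<theta>1 where pf1: "prenex_form (A \<union> {w} \<union> tvars t) (fbquant b x (Var w) (prenex q \<theta>)) q1 \<theta>1"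
    by (rule push_fbquant[where A = "A \<union> {w} \<union> tvars t" and b = b and x = x and t = "Var w"])
      (use nf A w in \<open>auto simp: prenex_form_def finite_tvars\<close>)
  obtain q2 \<theta>2 where pf2: "prenex_form A (fbquant b w t (prenex q1 \<theta>1)) q2 \<theta>2"
    by (rule push_fbquant[where A = A and b = b and x = w and t = t])
      (use pf1 A w in \<open>auto simp: prenex_form_def\<close>)
  have "fbquant b x t f \<approx> fbquant b x t (prenex q \<theta>)"
    using nf by (intro fm_equiv_fbquant) (simp add: prenex_form_def)
  also have "\<dots> \<approx> fbquant b w t (fbquant b x (Var w) (prenex q \<theta>))"
    using w w_fv by (intro fbquant_equiv_split) auto
  also have "\<dots> \<approx> fbquant b w t (prenex q1 \<theta>1)"
    using pf1 by (intro fm_equiv_fbquant) (simp add: prenex_form_def)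
  finally have "prenex_form A (fbquant b x t f) q2 \<theta>2"
    using pf1 nf by (intro prenex_form_equiv[OF pf2]) (auto simp: prenex_form_def)
  then show ?thesis by blast
qed

lemma prenex_form_exists: "finite A \<Longrightarrow> \<exists>q \<theta>. prenex_form A f q \<theta>"
proof (induction f arbitrary: A)
  case FOne
  show ?case
    by (intro exI[of _ "[]"] exI[of _ FOne]) (simp add: prenex_form_def monotone_prenex_def)
next
  case (FDist s t)
  show ?case
    by (intro exI[of _ "[]"] exI[of _ "FDist s t"]) (simp add: prenex_form_def monotone_prenex_def)
next
  case (FAdd f g)
  then show ?case by (rule prenex_form_FAdd)
next
  case (FScal r f)
  then show ?case by (blast intro: prenex_form_FScal)
next
  case (FSup x f)
  then show ?case using prenex_form_fquant[of f A True x] by (simp add: fquant_def)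
next
  case (FInf x f)
  then show ?case using prenex_form_fquant[of f A False x] by (simp add: fquant_def)
next
  case (FBSup x t f)
  then show ?case using prenex_form_fbquant[of f A True x t] by (simp add: fbquant_def)
next
  case (FBInf x t f)
  then show ?case using prenex_form_fbquant[of f A False x t] by (simp add: fbquant_def)
qed

end

section \<open>Cofinal extensions\<close>

lemma feval_prenex_cofinal:
  assumes N: "band_lstr N" and cof: "cofinal_ext M N" and s0: "sigma0_elem M N"
  shows "monotone_prenex q \<theta> \<Longrightarrow> range \<sigma> \<subseteq> carrier M
    \<Longrightarrow> feval M \<sigma> (prenex q \<theta>) = feval N \<sigma> (prenex q \<theta>)"
proof (induction q arbitrary: \<sigma>)
  case Nil
  then show ?case using s0 by (simp add: sigma0_elem_def monotone_prenex_def)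
next
  case (Cons p r)
  obtain c s where p: "p = (c, s)" by fastforce
  interpret N: band_lstr N by (rule N)
  have sub: "carrier M \<subseteq> carrier N" and up: "\<And>a. a \<in> carrier N \<Longrightarrow> \<exists>a'\<in>carrier M. mt N a a' = a"
    using cof by (auto simp: cofinal_ext_def substructure_def leq_def)
  have M_ne: "carrier M \<noteq> {}" using N.carrier_ne up by blast
  have mono: "monotone_in c s (prenex r \<theta>)" and mp_r: "monotone_prenex r \<theta>"
    using Cons.prems(1) p by (auto simp: monotone_prenex_def intro: monotone_in_prenex)
  define h where "h = (\<lambda>a. feval N (\<sigma>(s := a)) (prenex r \<theta>))"
  have \<sigma>N: "range \<sigma> \<subseteq> carrier N" using Cons.prems(2) sub by blast
  have "feval M (\<sigma>(s := a)) (prenex r \<theta>) = h a" if "a \<in> carrier M" for a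
    unfolding h_def using Cons.prems(2) that by (intro Cons.IH[OF mp_r] range_upd_subset)
  then have "feval M \<sigma> (prenex (p # r) \<theta>) = quant c (carrier M) h"
    using p by (simp add: feval_fquant cong: quant_cong)
  also have "\<dots> = quant c (carrier N) h"
  proof (rule quant_cofinal[OF sub M_ne])
    show "\<bar>h a\<bar> \<le> fm_bound (prenex r \<theta>)" if "a \<in> carrier N" for a
      unfolding h_def using \<sigma>N that by (rule N.feval_upd_bound)
    fix a assume a: "a \<in> carrier N"
    then obtain a' where a': "a' \<in> carrier M" "mt N a a' = a" using up by blast
    then have "le_pol c (h a) (h a')"
      unfolding h_def using a sub mono \<sigma>N by (intro N.feval_monotone_in) auto
    then show "\<exists>a'\<in>carrier M. le_pol c (h a) (h a')" using a'(1) by blast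
  qed
  also have "\<dots> = feval N \<sigma> (prenex (p # r) \<theta>)"
    using p by (simp add: feval_fquant h_def)
  finally show ?case .
qed

theorem mainTheorem11:
  fixes M N :: "'a lstr"
  assumes "model_AA0 M" and "model_AA0 N"
    and "cofinal_ext M N"
    and "sigma0_elem M N"
    and "collection M" and "collection N"
  shows "elem M N"
  unfolding elem_def
proof (intro allI impI)
  fix \<phi> and \<sigma> :: "nat \<Rightarrow> 'a"
  assume \<sigma>: "range \<sigma> \<subseteq> carrier M"
  have M: "band_lstr M" and N: "band_lstr N"
    using assms(1,2) by (simp_all add: model_AA0_band_lstr)
  interpret collection_class "{M, N}"
    using M N assms(5,6) by (intro collection_class.intro) auto
  obtain q \<theta> where nf: "prenex_form {} \<phi> q \<theta>"
    using prenex_form_exists by blast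
  have \<sigma>N: "range \<sigma> \<subseteq> carrier N"
    using \<sigma> assms(3) by (auto simp: cofinal_ext_def substructure_def)
  have "feval M \<sigma> \<phi> = feval M \<sigma> (prenex q \<theta>)"
    using nf \<sigma> by (auto simp: prenex_form_def intro: fm_equivD)
  also have "\<dots> = feval N \<sigma> (prenex q \<theta>)"
    using nf \<sigma> by (intro feval_prenex_cofinal[OF N assms(3,4)]) (simp_all add: prenex_form_def)
  also have "\<dots> = feval N \<sigma> \<phi>"
    using nf \<sigma>N by (auto simp: prenex_form_def intro: fm_equivD[symmetric])
  finally show "feval M \<sigma> \<phi> = feval N \<sigma> \<phi>" .
qed

end
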